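(* Let $\Omega\subset\mathbb{C}$ be a simply connected domain, $(g,\mathcal{P},\mathcal{Q})$ a Weierstrass data of the first kind on $\Omega$, and $\lambda\in\mathbb{R}$ with $1+i\lambda g(z)\neq0$ for all $z\in\Omega$. Let $g_\lambda:=\frac{g}{1+i\lambda g}$, $\mathcal{P}_\lambda:=\mathcal{P}$, and let $\mathcal{Q}_\lambda:\Omega\to\mathbb{R}$ be a $\mathcal{C}^2$ function with $(\mathcal{Q}_\lambda)_z=\left(\frac1g+i\lambda\right)(g\mathcal{Q}_z-i\lambda\mathcal{P}_z)$ (so that $(g_\lambda,\mathcal{P}_\lambda,\mathcal{Q}_\lambda)$ is again a Weierstrass data of the first kind). Then $$\mathbf{X}_{[g_\lambda,\mathcal{P}_\lambda,\mathcal{Q}_\lambda]}=L_\lambda\,\mathbf{X}_{[g,\mathcal{P},\mathcal{Q}]}$$ up to an additive constant vector, where $L_\lambda$ is the linear map of $\mathbb{L}^4$ with matrix $$L_\lambda=\begin{bmatrix}1&0&0&0\\0&1&-\lambda&-\lambda\\0&\lambda&1-\frac{\lambda^2}{2}&-\frac{\lambda^2}{2}\\0&-\lambda&\frac{\lambda^2}{2}&1+\frac{\lambda^2}{2}\end{bmatrix}.$$ In particular the two marginally trapped surfaces are congruent in $\mathbb{L}^4$.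
   Context: $\Omega\subset\mathbb{R}^2\equiv\mathbb{C}$ has complex coordinate $z=u+iv$, and $\partial_z=\frac12(\partial_u-i\partial_v)$, $\partial_{\overline z}=\frac12(\partial_u+i\partial_v)$; subscripts denote partial derivatives. $\mathbb{L}^4$ is $\mathbb{R}^4$ with the Lorentzian metric $\langle x,y\rangle=x_1y_1+x_2y_2+x_3y_3-x_4y_4$. A Weierstrass data of the first kind on $\Omega$ is a triple $(g,\mathcal{P},\mathcal{Q})$ where $g:\Omega\to\mathbb{C}\setminus\{0\}$ and $\mathcal{P},\mathcal{Q}:\Omega\to\mathbb{R}$ are $\mathcal{C}^2$, satisfying $g_{\overline z}=0$, $\mathcal{P}_{z\overline z}=|g|^2\mathcal{Q}_{z\overline z}$, and $\mathcal{P}_z-|g|^2\mathcal{Q}_z\neq0$ at every point of $\Omega$. For such data, $\mathbf{X}_{[g,\mathcal{P},\mathcal{Q}]}:\Omega\to\mathbb{R}^4$ denotes any map (determined up to an additive constant vector) with $\mathbf{X}_z=\mathcal{P}_z\,(1/g,\ i/g,\ 1,\ 1)^T+\mathcal{Q}_z\,(g,\ -ig,\ -1,\ 1)^T$; it is a conformal parameterization of a marginally trapped surface in $\mathbb{L}^4$. *)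

theory Defs
  imports "HOL-Analysis.Analysis"
begin

definition pu :: "(complex \<Rightarrow> 'a::real_normed_vector) \<Rightarrow> complex \<Rightarrow> 'a" where
  "pu f z = frechet_derivative f (at z) 1"

definition pv :: "(complex \<Rightarrow> 'a::real_normed_vector) \<Rightarrow> complex \<Rightarrow> 'a" where
  "pv f z = frechet_derivative f (at z) \<i>"

definition dz :: "(complex \<Rightarrow> complex) \<Rightarrow> complex \<Rightarrow> complex" where
  "dz f z = (pu f z - \<i> * pv f z) / 2"

definition dzbar :: "(complex \<Rightarrow> complex) \<Rightarrow> complex \<Rightarrow> complex" where
  "dzbar f z = (pu f z + \<i> * pv f z) / 2"

definition dzR :: "(complex \<Rightarrow> real) \<Rightarrow> complex \<Rightarrow> complex" where
  "dzR f = dz (\<lambda>w. complex_of_real (f w))"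

(* C^1 and C^2 on a set (intended: open set): differentiable with continuous partials *)
definition C1_on :: "complex set \<Rightarrow> (complex \<Rightarrow> 'a::real_normed_vector) \<Rightarrow> bool" where
  "C1_on S f \<longleftrightarrow> (\<forall>z\<in>S. f differentiable (at z)) \<and>
     continuous_on S (pu f) \<and> continuous_on S (pv f)"

definition C2_on :: "complex set \<Rightarrow> (complex \<Rightarrow> 'a::real_normed_vector) \<Rightarrow> bool" where
  "C2_on S f \<longleftrightarrow> C1_on S f \<and> C1_on S (pu f) \<and> C1_on S (pv f)"

definition WD1 :: "complex set \<Rightarrow> (complex \<Rightarrow> complex) \<Rightarrow> (complex \<Rightarrow> real) \<Rightarrow> (complex \<Rightarrow> real) \<Rightarrow> bool" where
  "WD1 \<Omega> g P Q \<longleftrightarrow> C2_on \<Omega> g \<and> C2_on \<Omega> P \<and> C2_on \<Omega> Q \<and>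
     (\<forall>z\<in>\<Omega>. g z \<noteq> 0) \<and>
     (\<forall>z\<in>\<Omega>. dzbar g z = 0) \<and>
     (\<forall>z\<in>\<Omega>. dzbar (dzR P) z = complex_of_real ((cmod (g z))\<^sup>2) * dzbar (dzR Q) z) \<and>
     (\<forall>z\<in>\<Omega>. dzR P z - complex_of_real ((cmod (g z))\<^sup>2) * dzR Q z \<noteq> 0)"

definition Xz :: "(complex \<Rightarrow> complex) \<Rightarrow> (complex \<Rightarrow> real) \<Rightarrow> (complex \<Rightarrow> real) \<Rightarrow> complex \<Rightarrow> complex ^ 4" where
  "Xz g P Q z = vector
     [dzR P z * (1 / g z) + dzR Q z * g z,
      dzR P z * (\<i> / g z) + dzR Q z * (- \<i> * g z),
      dzR P z * 1 + dzR Q z * (-1),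
      dzR P z * 1 + dzR Q z * 1]"

definition is_X :: "complex set \<Rightarrow> (complex \<Rightarrow> complex) \<Rightarrow> (complex \<Rightarrow> real) \<Rightarrow> (complex \<Rightarrow> real) \<Rightarrow> (complex \<Rightarrow> real ^ 4) \<Rightarrow> bool" where
  "is_X \<Omega> g P Q X \<longleftrightarrow> (\<forall>z\<in>\<Omega>. X differentiable (at z)) \<and>
     (\<forall>z\<in>\<Omega>. \<forall>k. dzR (\<lambda>w. X w $ k) z = Xz g P Q z $ k)"

definition lorentz :: "real ^ 4 \<Rightarrow> real ^ 4 \<Rightarrow> real" where
  "lorentz x y = x$1 * y$1 + x$2 * y$2 + x$3 * y$3 - x$4 * y$4"

definition Lmat :: "real \<Rightarrow> real ^ 4 ^ 4" where
  "Lmat l = vector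
     [vector [1, 0, 0, 0],
      vector [0, 1, -l, -l],
      vector [0, l, 1 - l\<^sup>2/2, - (l\<^sup>2/2)],
      vector [0, -l, l\<^sup>2/2, 1 + l\<^sup>2/2]]"

end

theory Submission
  imports Defs
begin

text \<open>Substituting \<open>g\<^sub>\<lambda> = g/(1 + i\<lambda>g)\<close> and the prescribed \<open>(\<Q>\<^sub>\<lambda>)\<^sub>z\<close> into the
  formula for \<open>X\<^sub>z\<close> gives, pointwise, the algebraic identity \<open>(X\<^sub>\<lambda>)\<^sub>z = L\<^sub>\<lambda> X\<^sub>z\<close>.
  Hence every component of the real map \<open>X\<^sub>\<lambda> - L\<^sub>\<lambda> X\<close> has vanishing \<open>\<partial>\<^sub>z\<close>; for a
  real-valued function this means its differential vanishes, so on the connected domain the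
  difference is a constant vector.\<close>

lemma vector_4_nth [simp]:
  "(vector [x, y, z, w] :: 'a::zero ^ 4) $ 1 = x"
  "(vector [x, y, z, w] :: 'a::zero ^ 4) $ 2 = y"
  "(vector [x, y, z, w] :: 'a::zero ^ 4) $ 3 = z"
  "(vector [x, y, z, w] :: 'a::zero ^ 4) $ 4 = w"
  unfolding vector_def by simp_all

lemma dzR_has_derivative:
  assumes "(f has_derivative f') (at z)"
  shows "dzR f z = (of_real (f' 1) - \<i> * of_real (f' \<i>)) / 2"
proof -
  have "((\<lambda>w. complex_of_real (f w)) has_derivative (\<lambda>h. of_real (f' h))) (at z)"
    using has_derivative_of_real[OF assms] by simp
  then have "frechet_derivative (\<lambda>w. complex_of_real (f w)) (at z) = (\<lambda>h. of_real (f' h))"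
    by (rule frechet_derivative_at[symmetric])
  then show ?thesis
    unfolding dzR_def dz_def pu_def pv_def by simp
qed

lemma dzR_eq_0_imp_derivative_eq_0:
  assumes f': "(f has_derivative f') (at z)" and "dzR f z = 0"
  shows "f' = (\<lambda>h. 0)"
proof
  fix h :: complex
  have "f' 1 = 0" "f' \<i> = 0"
    using assms dzR_has_derivative[OF f'] by (simp_all add: complex_eq_iff)
  moreover have "f' h = Re h * f' 1 + Im h * f' \<i>"
  proof -
    have "h = Re h *\<^sub>R 1 + Im h *\<^sub>R \<i>" by (simp add: complex_eq_iff)
    then have "f' h = f' (Re h *\<^sub>R 1 + Im h *\<^sub>R \<i>)" by simp
    then show ?thesis
      using has_derivative_linear[OF f'] by (simp add: linear_add linear_scale)
  qed
  ultimately show "f' h = 0" by simp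
qed

lemma has_derivative_vec_nth:
  assumes "(F has_derivative F') (at z)"
  shows "((\<lambda>w. F w $ j) has_derivative (\<lambda>h. F' h $ j)) (at z)"
  using bounded_linear.has_derivative[OF bounded_linear_vec_nth assms] .

lemma dzR_diff_matrix_vector_mult:
  fixes X :: "complex \<Rightarrow> real ^ 'n" and Y :: "complex \<Rightarrow> real ^ 'm" and M :: "real ^ 'n ^ 'm"
  assumes "X differentiable (at z)" and "Y differentiable (at z)"
  shows "dzR (\<lambda>w. (Y w - M *v X w) $ k) z =
    dzR (\<lambda>w. Y w $ k) z - (\<Sum>j\<in>UNIV. of_real (M $ k $ j) * dzR (\<lambda>w. X w $ j) z)"
proof -
  obtain D E where D: "(X has_derivative D) (at z)" and E: "(Y has_derivative E) (at z)"
    using assms by (auto simp: differentiable_def)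
  have YX: "((\<lambda>w. (Y w - M *v X w) $ k) has_derivative
      (\<lambda>h. E h $ k - (\<Sum>j\<in>UNIV. M $ k $ j * D h $ j))) (at z)"
    unfolding vector_minus_component matrix_vector_mult_def vec_lambda_beta
    by (intro has_derivative_diff has_derivative_sum has_derivative_mult_right
        has_derivative_vec_nth D E)
  show ?thesis
    unfolding dzR_has_derivative[OF YX] dzR_has_derivative[OF has_derivative_vec_nth[OF D]]
      dzR_has_derivative[OF has_derivative_vec_nth[OF E]]
    by (simp add: diff_divide_distrib sum_subtractf sum_divide_distrib right_diff_distrib
        sum_distrib_left mult.assoc mult.left_commute)
qed

lemma dzR_eq_0_imp_constant_on:
  fixes X :: "complex \<Rightarrow> real ^ 'n"
  assumes "open S" and "connected S" and "\<forall>z\<in>S. X differentiable (at z)"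
    and "\<forall>z\<in>S. \<forall>k. dzR (\<lambda>w. X w $ k) z = 0"
  shows "\<exists>c. \<forall>z\<in>S. X z = c"
proof -
  have zero: "(X has_derivative (\<lambda>h. 0)) (at z)" if "z \<in> S" for z
  proof -
    obtain D where D: "(X has_derivative D) (at z)"
      using assms(3) \<open>z \<in> S\<close> by (auto simp: differentiable_def)
    have "(\<lambda>h. D h $ k) = (\<lambda>h. 0)" for k
      using dzR_eq_0_imp_derivative_eq_0 has_derivative_vec_nth[OF D]
        assms(4) \<open>z \<in> S\<close> by blast
    then have "D = (\<lambda>h. 0)"
      by (auto simp: vec_eq_iff fun_eq_iff dest: fun_cong)
    with D show ?thesis by simp
  qed
  have "X constant_on S"
  proof (rule has_derivative_zero_connected_constant_on[where K = "{}"])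
    show "continuous_on S X"
      using zero by (meson continuous_at_imp_continuous_on differentiableI differentiable_imp_continuous_within)
    show "\<forall>z\<in>S - {}. (X has_derivative (\<lambda>h. 0)) (at z within S)"
      using zero has_derivative_at_withinI by blast
  qed (use assms(1,2) in auto)
  then show ?thesis
    unfolding constant_on_def by blast
qed

lemma Xz_transformed_data:
  fixes l :: real
  assumes "g z \<noteq> 0" and "1 + \<i> * of_real l * g z \<noteq> 0"
    and "dzR Ql z = (1 / g z + \<i> * of_real l) * (g z * dzR Q z - \<i> * of_real l * dzR P z)"
  shows "Xz (\<lambda>z. g z / (1 + \<i> * of_real l * g z)) P Ql z $ k =
    (\<Sum>j\<in>UNIV. of_real (Lmat l $ k $ j) * Xz g P Q z $ j)"
proof -
  \<comment> \<open>Keeping \<open>1 + i\<lambda>g\<close> atomic lets \<open>field_simps\<close> cancel it; it is expanded only afterwards.\<close>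
  define d where "d = 1 + \<i> * of_real l * g z"
  have d: "d \<noteq> 0" "1 + \<i> * of_real l * g z = d"
    using assms(2) by (simp_all add: d_def)
  from exhaust_4[of k] show ?thesis
    using assms(1) d(1) unfolding Xz_def Lmat_def assms(3) d(2)
    by (elim disjE; simp add: sum_4 field_simps power2_eq_square; simp add: d_def algebra_simps)
qed

lemma lorentz_Lmat: "lorentz (Lmat l *v x) (Lmat l *v y) = lorentz x y"
  by (simp add: lorentz_def matrix_vector_mult_def Lmat_def sum_4 field_simps power2_eq_square)

lemma is_X_transformed_minus_Lmat:
  fixes l :: real
  assumes "WD1 \<Omega> g P Q" and "\<forall>z\<in>\<Omega>. 1 + \<i> * of_real l * g z \<noteq> 0"
    and "\<forall>z\<in>\<Omega>. dzR Ql z = (1 / g z + \<i> * of_real l) * (g z * dzR Q z - \<i> * of_real l * dzR P z)"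
    and "is_X \<Omega> g P Q X" and "is_X \<Omega> (\<lambda>z. g z / (1 + \<i> * of_real l * g z)) P Ql Xl"
  assumes "z \<in> \<Omega>"
  shows "dzR (\<lambda>w. (Xl w - Lmat l *v X w) $ k) z = 0"
proof -
  have "dzR (\<lambda>w. (Xl w - Lmat l *v X w) $ k) z =
      dzR (\<lambda>w. Xl w $ k) z - (\<Sum>j\<in>UNIV. of_real (Lmat l $ k $ j) * dzR (\<lambda>w. X w $ j) z)"
    using assms(4-6) by (intro dzR_diff_matrix_vector_mult) (auto simp: is_X_def)
  also have "\<dots> = Xz (\<lambda>z. g z / (1 + \<i> * of_real l * g z)) P Ql z $ k -
      (\<Sum>j\<in>UNIV. of_real (Lmat l $ k $ j) * Xz g P Q z $ j)"
    using assms(4-6) by (simp add: is_X_def)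
  also have "\<dots> = 0"
    using assms(1-3,6) by (simp add: WD1_def Xz_transformed_data)
  finally show ?thesis .
qed

text \<open>Simple connectivity and the regularity of \<open>\<Q>\<^sub>\<lambda>\<close> only serve to make \<open>X\<^sub>\<lambda>\<close> exist;
  here both maps are given.\<close>

theorem mainTheorem8:
  fixes \<Omega> :: "complex set" and g :: "complex \<Rightarrow> complex" and P Q Ql :: "complex \<Rightarrow> real"
    and l :: real and X Xl :: "complex \<Rightarrow> real ^ 4"
  assumes "open \<Omega>" and "connected \<Omega>" and "simply_connected \<Omega>"
    and "WD1 \<Omega> g P Q"
    and "\<forall>z\<in>\<Omega>. 1 + \<i> * complex_of_real l * g z \<noteq> 0"
    and "C2_on \<Omega> Ql"
    and "\<forall>z\<in>\<Omega>. dzR Ql z = (1 / g z + \<i> * complex_of_real l) * (g z * dzR Q z - \<i> * complex_of_real l * dzR P z)"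
    and "is_X \<Omega> g P Q X"
    and "is_X \<Omega> (\<lambda>z. g z / (1 + \<i> * complex_of_real l * g z)) P Ql Xl"
  shows "(\<exists>c. \<forall>z\<in>\<Omega>. Xl z = Lmat l *v X z + c) \<and>
         (\<forall>x y. lorentz (Lmat l *v x) (Lmat l *v y) = lorentz x y)"
proof -
  have "\<forall>z\<in>\<Omega>. (\<lambda>w. Xl w - Lmat l *v X w) differentiable (at z)"
  proof
    fix z assume "z \<in> \<Omega>"
    then have "X differentiable (at z)" and "Xl differentiable (at z)"
      using assms(8,9) by (simp_all add: is_X_def)
    moreover have "(*v) (Lmat l) differentiable (at (X z))"
      by (simp add: bounded_linear_imp_differentiable)
    ultimately show "(\<lambda>w. Xl w - Lmat l *v X w) differentiable (at z)"
      by (simp add: differentiable_compose differentiable_diff)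
  qed
  moreover have "\<forall>z\<in>\<Omega>. \<forall>k. dzR (\<lambda>w. (Xl w - Lmat l *v X w) $ k) z = 0"
    using is_X_transformed_minus_Lmat[OF assms(4,5,7-9)] by blast
  ultimately obtain c where "\<forall>z\<in>\<Omega>. Xl z - Lmat l *v X z = c"
    using dzR_eq_0_imp_constant_on[OF assms(1,2), of "\<lambda>w. Xl w - Lmat l *v X w"] by auto
  then have "\<forall>z\<in>\<Omega>. Xl z = Lmat l *v X z + c"
    by (simp add: diff_eq_eq add.commute)
  with lorentz_Lmat show ?thesis by blast
qed

end
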